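(* Let $q\ge 2$ be an integer and let $\delta,\gamma\ge 0$ satisfy $\frac{\delta}{1-\frac1q}+\frac{\gamma}{q-1}\ge 1$. Then there is no infinite family of $q$-ary codes with rate bounded away from zero (block length $n\to\infty$) that is list-decodable, with list size $2^{o(n)}$, from $\delta n$ deletions and $\gamma n$ insertions.
   Context: A $q$-ary code of block length $n$ is a set $C\subseteq\Sigma^n$ with $|\Sigma|=q$; its rate is $\log_q|C|/n$. A string $y$ is obtained from $x$ by $D$ deletions and $I$ insertions if $y$ results from $x$ by deleting $D$ symbols and inserting $I$ symbols (at arbitrary positions, with arbitrary values). A code $C$ is $L$-list decodable from $\delta n$ deletions and $\gamma n$ insertions if for every string $y$ over $\Sigma$, at most $L$ codewords $x\in C$ are such that $y$ can be obtained from $x$ by at most $\delta n$ deletions and at most $\gamma n$ insertions. *)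

theory Defs
  imports "HOL-Analysis.Analysis" "HOL-Library.Sublist"
begin

definition is_code :: "nat \<Rightarrow> nat \<Rightarrow> nat list set \<Rightarrow> bool" where
  "is_code q n C \<longleftrightarrow> C \<subseteq> {x. length x = n \<and> set x \<subseteq> {0..<q}}"

definition code_rate :: "nat \<Rightarrow> nat \<Rightarrow> nat list set \<Rightarrow> real" where
  "code_rate q n C = log (real q) (real (card C)) / real n"

text \<open>y is obtained from x by deleting D symbols and inserting I symbols:
 the surviving symbols of x form a common subsequence z.\<close>
definition del_ins :: "nat \<Rightarrow> nat \<Rightarrow> 'a list \<Rightarrow> 'a list \<Rightarrow> bool" where
  "del_ins D I x y \<longleftrightarrow>
     (\<exists>z. subseq z x \<and> length z + D = length x \<and> subseq z y \<and> length y = length z + I)"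

definition list_decodable ::
  "nat \<Rightarrow> nat \<Rightarrow> nat list set \<Rightarrow> nat \<Rightarrow> real \<Rightarrow> real \<Rightarrow> bool" where
  "list_decodable q n C L \<delta> \<gamma> \<longleftrightarrow>
     (\<forall>y. set y \<subseteq> {0..<q} \<longrightarrow>
        finite {x\<in>C. \<exists>D I. real D \<le> \<delta> * real n \<and> real I \<le> \<gamma> * real n \<and> del_ins D I x y}
      \<and> card {x\<in>C. \<exists>D I. real D \<le> \<delta> * real n \<and> real I \<le> \<gamma> * real n \<and> del_ins D I x y} \<le> L)"

end

theory Submission
  imports Defs
begin

text \<open>Every word x of length n over an alphabet of size q can be steered, by at most
  \<open>\<delta>n\<close> deletions and \<open>\<gamma>n\<close> insertions, to one of only \<open>q\<^sup>2(n+1)\<close> words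
  \<open>a\<^sup>c b (0 1 \<dots> q-1)\<^sup>m\<^sup>-\<^sup>1\<close>: keep the last m symbols of x, embedded into the
  periodic tail at insertion cost \<open>(q-1)(m-1)\<close>, and of the first \<open>n - m\<close> symbols keep only
  the most frequent letter a, at deletion cost at most \<open>(1 - 1/q)(n - m)\<close>. The hypothesis on
  \<open>\<delta>\<close> and \<open>\<gamma>\<close> is exactly what makes both budgets suffice. Hence a list-decodable code has
  at most \<open>q\<^sup>2(n+1)L\<close> codewords, which contradicts positive rate once \<open>L = 2\<^sup>o\<^sup>(\<^sup>n\<^sup>)\<close>.\<close>

lemma pigeonhole_count_list:
  fixes xs :: "nat list"
  assumes "set xs \<subseteq> {..<q}" and "q > 0"
  shows "\<exists>a<q. length xs \<le> q * count_list xs a"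
proof (rule ccontr)
  assume "\<not> ?thesis"
  then have "(\<Sum>a<q. q * count_list xs a) < (\<Sum>a<q. length xs)"
    using \<open>q > 0\<close> by (intro sum_strict_mono) (auto simp: not_le)
  then show False
    using sum_count_set[OF assms(1)] by (simp add: sum_distrib_left[symmetric])
qed

lemma subseq_replicate_count_list: "subseq (replicate (count_list xs a) a) xs"
  by (simp add: count_list_eq_length_filter replicate_length_filter)

lemma subseq_concat_replicate_upt:
  "set s \<subseteq> {0..<q} \<Longrightarrow> subseq s (concat (replicate (length s) [0..<q]))"
proof (induction s)
  case Nil
  then show ?case by simp
next
  case (Cons x s)
  have "subseq [x] [0..<q]"
    using Cons.prems by (simp add: subseq_singleton_left)
  with Cons show ?case
    using list_emb_append_mono[of "(=)" "[x]" "[0..<q]"] by fastforce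
qed

definition decoding_word :: "nat \<Rightarrow> nat \<Rightarrow> nat \<Rightarrow> nat \<Rightarrow> nat \<Rightarrow> nat list" where
  "decoding_word q m a c b = replicate c a @ b # concat (replicate (m - 1) [0..<q])"

lemma length_decoding_word: "length (decoding_word q m a c b) = c + 1 + (m - 1) * q"
  by (simp add: decoding_word_def length_concat sum_list_replicate)

lemma set_decoding_word: "a < q \<Longrightarrow> b < q \<Longrightarrow> set (decoding_word q m a c b) \<subseteq> {0..<q}"
  by (auto simp: decoding_word_def)

lemma del_ins_decoding_word:
  fixes x :: "nat list"
  assumes x: "set x \<subseteq> {0..<q}" and "q > 0" and m: "1 \<le> m" "m \<le> length x"
  defines "p \<equiv> length x - m"
  obtains a c b where "a < q" "b < q" "c \<le> p" "q * (p - c) \<le> (q - 1) * p"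
    "del_ins (p - c) ((q - 1) * (m - 1)) x (decoding_word q m a c b)"
proof -
  define pre where "pre = take p x"
  define suf where "suf = drop p x"
  have x_eq: "x = pre @ suf" by (simp add: pre_def suf_def)
  have lengths: "length pre = p" "length suf = m"
    using m by (auto simp: pre_def suf_def p_def)
  obtain a where a: "a < q" "p \<le> q * count_list pre a"
    using pigeonhole_count_list[of pre q] x x_eq lengths \<open>q > 0\<close> by (auto simp: atLeast0LessThan)
  define c where "c = count_list pre a"
  have "c \<le> p"
    using lengths count_le_length[of pre a] by (simp add: c_def)
  obtain b rest where suf_eq: "suf = b # rest"
    using lengths m by (cases suf) auto
  have b: "b < q" and rest: "set rest \<subseteq> {0..<q}" "length rest = m - 1"
    using x x_eq suf_eq lengths by auto
  define z where "z = replicate c a @ suf"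
  have "subseq z x"
    unfolding z_def x_eq c_def
    by (rule list_emb_append_mono[OF subseq_replicate_count_list]) simp
  moreover have "subseq z (decoding_word q m a c b)"
    using subseq_concat_replicate_upt[OF rest(1)] rest(2)
    by (simp add: z_def decoding_word_def suf_eq subseq_append')
  moreover have "length z + (p - c) = length x"
    using lengths \<open>c \<le> p\<close> m by (simp add: z_def p_def)
  moreover have "length (decoding_word q m a c b) = length z + (q - 1) * (m - 1)"
    using lengths m \<open>q > 0\<close>
    by (cases m; cases q) (auto simp: z_def length_decoding_word algebra_simps)
  ultimately have "del_ins (p - c) ((q - 1) * (m - 1)) x (decoding_word q m a c b)"
    unfolding del_ins_def by blast
  moreover have "q * (p - c) \<le> (q - 1) * p"
    using a(2) by (simp add: c_def diff_mult_distrib diff_mult_distrib2)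
  ultimately show thesis
    using that a(1) b \<open>c \<le> p\<close> by blast
qed

text \<open>The longest tail whose insertion cost \<open>(q-1)(m-1)\<close> stays within \<open>\<gamma>n\<close>.\<close>

definition tail_length :: "nat \<Rightarrow> real \<Rightarrow> nat \<Rightarrow> nat" where
  "tail_length q \<gamma> n = min n (nat \<lfloor>\<gamma> * real n / (real q - 1)\<rfloor> + 1)"

lemma tail_length_bounds:
  assumes "q \<ge> 2" and "n > 0" and "\<gamma> \<ge> 0"
  shows "1 \<le> tail_length q \<gamma> n" and "tail_length q \<gamma> n \<le> n"
    and "real ((q - 1) * (tail_length q \<gamma> n - 1)) \<le> \<gamma> * real n"
proof -
  define s where "s = \<gamma> * real n / (real q - 1)"
  have "real q - 1 > 0" using assms(1) by simp
  then have "s \<ge> 0" and \<gamma>n: "\<gamma> * real n = (real q - 1) * s"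
    using assms(3) by (simp_all add: s_def)
  show "1 \<le> tail_length q \<gamma> n" "tail_length q \<gamma> n \<le> n"
    using assms(2) by (auto simp: tail_length_def)
  have "real (tail_length q \<gamma> n - 1) \<le> s"
    using \<open>s \<ge> 0\<close> by (simp add: tail_length_def s_def) linarith
  then show "real ((q - 1) * (tail_length q \<gamma> n - 1)) \<le> \<gamma> * real n"
    using \<open>real q - 1 > 0\<close> \<gamma>n assms(1) by (simp add: of_nat_diff mult_left_mono)
qed

lemma head_length_within_budget:
  assumes "q \<ge> 2" and "\<delta> \<ge> 0" and "\<gamma> \<ge> 0" and threshold: "real q - 1 \<le> real q * \<delta> + \<gamma>"
  shows "(real q - 1) * real (n - tail_length q \<gamma> n) \<le> real q * (\<delta> * real n)"
proof (cases "tail_length q \<gamma> n = n")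
  case False
  define s where "s = \<gamma> * real n / (real q - 1)"
  have "real q - 1 > 0" using assms(1) by simp
  then have "s \<ge> 0" and \<gamma>n: "\<gamma> * real n = (real q - 1) * s"
    using assms(3) by (simp_all add: s_def)
  from False have "tail_length q \<gamma> n = nat \<lfloor>s\<rfloor> + 1" "tail_length q \<gamma> n \<le> n"
    by (auto simp: tail_length_def s_def)
  with \<open>s \<ge> 0\<close> have "real (n - tail_length q \<gamma> n) \<le> real n - s"
    by (simp add: of_nat_diff) linarith
  then have "(real q - 1) * real (n - tail_length q \<gamma> n) \<le> (real q - 1) * (real n - s)"
    using \<open>real q - 1 > 0\<close> by (intro mult_left_mono) auto
  also have "\<dots> = (real q - 1) * real n - \<gamma> * real n"
    using \<gamma>n by (simp add: algebra_simps)
  also have "\<dots> \<le> real q * (\<delta> * real n)"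
    using mult_right_mono[OF threshold, of "real n"] by (simp add: algebra_simps)
  finally show ?thesis .
qed (use assms(2) in simp)

lemma del_ins_decoding_word_within_budget:
  fixes x :: "nat list" and \<delta> \<gamma> :: real
  assumes q: "q \<ge> 2" and "n > 0" and x: "length x = n" "set x \<subseteq> {0..<q}"
    and "\<delta> \<ge> 0" and "\<gamma> \<ge> 0" and threshold: "real q - 1 \<le> real q * \<delta> + \<gamma>"
  obtains a c b D I where "a < q" "b < q" "c \<le> n"
    "real D \<le> \<delta> * real n" "real I \<le> \<gamma> * real n"
    "del_ins D I x (decoding_word q (tail_length q \<gamma> n) a c b)"
proof -
  define m where "m = tail_length q \<gamma> n"
  have m: "1 \<le> m" "m \<le> length x" and insertions: "real ((q - 1) * (m - 1)) \<le> \<gamma> * real n"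
    using tail_length_bounds[OF q \<open>n > 0\<close> \<open>\<gamma> \<ge> 0\<close>] x(1) by (simp_all add: m_def)
  obtain a c b where abc: "a < q" "b < q" "c \<le> n - m" and head: "q * (n - m - c) \<le> (q - 1) * (n - m)"
    and di: "del_ins (n - m - c) ((q - 1) * (m - 1)) x (decoding_word q m a c b)"
    using del_ins_decoding_word[OF x(2) _ m, of thesis] q unfolding x(1) by auto
  have "real q * real (n - m - c) \<le> (real q - 1) * real (n - m)"
    using of_nat_mono[OF head, where 'a = real] q by (simp add: of_nat_diff)
  also have "\<dots> \<le> real q * (\<delta> * real n)"
    using head_length_within_budget[OF q \<open>\<delta> \<ge> 0\<close> \<open>\<gamma> \<ge> 0\<close> threshold] by (simp add: m_def)
  finally have deletions: "real (n - m - c) \<le> \<delta> * real n"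
    using q by simp
  show thesis
    using that[folded m_def, OF abc(1,2) _ deletions insertions di] abc(3) by simp
qed

lemma card_le_of_list_decodable:
  fixes C :: "nat list set" and \<delta> \<gamma> :: real
  assumes q: "q \<ge> 2" and n: "n > 0" and "\<delta> \<ge> 0" and "\<gamma> \<ge> 0"
    and threshold: "real q - 1 \<le> real q * \<delta> + \<gamma>"
    and code: "is_code q n C" and decodable: "list_decodable q n C L \<delta> \<gamma>"
  shows "card C \<le> q * q * (n + 1) * L"
proof -
  define close where "close = (\<lambda>(a, c, b). {x\<in>C. \<exists>D I. real D \<le> \<delta> * real n
    \<and> real I \<le> \<gamma> * real n \<and> del_ins D I x (decoding_word q (tail_length q \<gamma> n) a c b)})"
  define J where "J = {0..<q} \<times> {0..n} \<times> {0..<q}"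
  have cover: "C \<subseteq> (\<Union>j\<in>J. close j)"
  proof
    fix x assume "x \<in> C"
    then have "length x = n" "set x \<subseteq> {0..<q}" using code by (auto simp: is_code_def)
    then obtain a c b D I where "a < q" "b < q" "c \<le> n" "real D \<le> \<delta> * real n"
      "real I \<le> \<gamma> * real n" "del_ins D I x (decoding_word q (tail_length q \<gamma> n) a c b)"
      using del_ins_decoding_word_within_budget[OF q n] assms(3-5) by metis
    with \<open>x \<in> C\<close> show "x \<in> (\<Union>j\<in>J. close j)"
      unfolding close_def J_def by (intro UN_I[of "(a, c, b)"]) auto
  qed
  have close_small: "finite (close j) \<and> card (close j) \<le> L" if "j \<in> J" for j
    using that decodable set_decoding_word
    by (auto simp: J_def close_def list_decodable_def)
  have "card C \<le> card (\<Union>j\<in>J. close j)"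
    using cover close_small by (intro card_mono) (auto simp: J_def)
  also have "\<dots> \<le> (\<Sum>j\<in>J. card (close j))"
    by (rule card_UN_le) (simp add: J_def)
  also have "\<dots> \<le> (\<Sum>j\<in>J. L)"
    using close_small by (intro sum_mono) auto
  also have "\<dots> = q * q * (n + 1) * L"
    by (simp add: J_def card_cartesian_product algebra_simps)
  finally show ?thesis .
qed

lemma card_ge_of_code_rate:
  assumes "q > 1" and "n > 0" and "r > 0" and "code_rate q n C \<ge> r"
  shows "real q powr (r * real n) \<le> real (card C)"
proof -
  have rate: "r * real n \<le> log (real q) (real (card C))"
    using assms(2,4) by (simp add: code_rate_def le_divide_eq mult.commute)
  moreover have "r * real n > 0" using assms(2,3) by simp
  ultimately have "card C > 0" by (cases "card C = 0") (auto simp: log_def)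
  have "real q powr (r * real n) \<le> real q powr log (real q) (real (card C))"
    using rate assms(1) by (intro powr_mono) auto
  also have "\<dots> = real (card C)" using assms(1) \<open>card C > 0\<close> by simp
  finally show ?thesis .
qed

lemma eventually_linear_less_power:
  fixes t A :: real
  assumes "t > 1"
  shows "\<forall>\<^sub>F N in sequentially. A * (real N + 1) < t ^ N"
proof -
  have "(\<lambda>N. real N / t ^ N) \<longlonglongrightarrow> 0"
    using lim_n_over_pown[of t] assms by simp
  moreover have "(\<lambda>N. 1 / t ^ N) \<longlonglongrightarrow> 0"
    using LIMSEQ_realpow_zero[of "1 / t"] assms by (simp add: power_one_over)
  ultimately have "(\<lambda>N. A * (real N + 1) / t ^ N) \<longlonglongrightarrow> A * (0 + 0)"
    by (simp only: add_divide_distrib times_divide_eq_right[symmetric]) (intro tendsto_intros)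
  then have "\<forall>\<^sub>F N in sequentially. A * (real N + 1) / t ^ N < 1"
    by (intro order_tendstoD(2)) auto
  then show ?thesis
    by eventually_elim (use assms in \<open>simp add: divide_less_eq\<close>)
qed

lemma threshold_of_normalized_threshold:
  fixes q :: nat and \<delta> \<gamma> :: real
  assumes "q \<ge> 2" and "\<delta> / (1 - 1 / real q) + \<gamma> / (real q - 1) \<ge> 1"
  shows "real q - 1 \<le> real q * \<delta> + \<gamma>"
proof -
  have "\<delta> / (1 - 1 / real q) = real q * \<delta> / (real q - 1)"
    using assms(1) by (simp add: field_simps)
  then show ?thesis
    using assms by (simp add: add_divide_distrib[symmetric] le_divide_eq)
qed

lemma exponential_not_le_poly_times_subexponential:
  fixes b s A :: real and n L :: "nat \<Rightarrow> nat"
  assumes b: "b > 1" and "s > 0" and "A \<ge> 0" and n: "filterlim n at_top sequentially"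
    and L: "\<forall>\<epsilon>>0. \<forall>\<^sub>F k in sequentially. real (L k) \<le> 2 powr (\<epsilon> * real (n k))"
    and bound: "\<And>k. b powr (s * real (n k)) \<le> A * (real (n k) + 1) * real (L k)"
  shows False
proof -
  define X where "X k = b powr (s * real (n k) / 2)" for k
  have "2 powr (s * log 2 b / 2 * real (n k)) = (2 powr log 2 b) powr (s * real (n k) / 2)" for k
    by (simp add: powr_powr mult_ac)
  then have "2 powr (s * log 2 b / 2 * real (n k)) = X k" for k
    using b by (simp add: X_def)
  then have "\<forall>\<^sub>F k in sequentially. real (L k) \<le> X k"
    using L \<open>s > 0\<close> b by (auto elim!: allE[of _ "s * log 2 b / 2"])
  moreover have "(b powr (s / 2)) ^ n k = X k" for k
  proof -
    have "(b powr (s / 2)) ^ n k = (b powr (s / 2)) powr real (n k)"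
      using b by (simp add: powr_realpow)
    then show ?thesis by (simp add: X_def powr_powr)
  qed
  moreover have "\<forall>\<^sub>F N in sequentially. A * (real N + 1) < (b powr (s / 2)) ^ N"
    using b \<open>s > 0\<close> by (intro eventually_linear_less_power gr_one_powr) auto
  note filterlim_iff[THEN iffD1, OF n, rule_format, OF this]
  ultimately have "\<forall>\<^sub>F k in sequentially. real (L k) \<le> X k \<and> A * (real (n k) + 1) < X k"
    by (simp add: eventually_conj_iff)
  then obtain k where Lk: "real (L k) \<le> X k" and nk: "A * (real (n k) + 1) < X k"
    by (auto simp: eventually_sequentially)
  have "X k * X k = b powr (s * real (n k))"
    by (simp add: X_def powr_add[symmetric])
  also have "\<dots> \<le> A * (real (n k) + 1) * real (L k)"
    by (rule bound)
  also have "\<dots> \<le> A * (real (n k) + 1) * X k"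
    using Lk \<open>A \<ge> 0\<close> by (intro mult_left_mono) auto
  also have "\<dots> < X k * X k"
    using nk b by (intro mult_strict_right_mono) (auto simp: X_def)
  finally show False by simp
qed

theorem proposition1:
  fixes q :: nat and \<delta> \<gamma> :: real
  assumes "q \<ge> 2" and "\<delta> \<ge> 0" and "\<gamma> \<ge> 0"
    and "\<delta> / (1 - 1 / real q) + \<gamma> / (real q - 1) \<ge> 1"
  shows "\<not> (\<exists>(n :: nat \<Rightarrow> nat) (C :: nat \<Rightarrow> nat list set) (L :: nat \<Rightarrow> nat) (r :: real).
            filterlim n at_top sequentially \<and>
            r > 0 \<and>
            (\<forall>k. is_code q (n k) (C k) \<and> code_rate q (n k) (C k) \<ge> r) \<and>
            (\<forall>\<epsilon>>0. \<forall>\<^sub>F k in sequentially. real (L k) \<le> 2 powr (\<epsilon> * real (n k))) \<and>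
            (\<forall>k. list_decodable q (n k) (C k) (L k) \<delta> \<gamma>))"
proof
  assume "\<exists>n C L r. filterlim n at_top sequentially \<and> r > 0 \<and>
            (\<forall>k. is_code q (n k) (C k) \<and> code_rate q (n k) (C k) \<ge> r) \<and>
            (\<forall>\<epsilon>>0. \<forall>\<^sub>F k in sequentially. real (L k) \<le> 2 powr (\<epsilon> * real (n k))) \<and>
            (\<forall>k. list_decodable q (n k) (C k) (L k) \<delta> \<gamma>)"
  then obtain n C L r where n: "filterlim n at_top sequentially" and "r > 0"
    and code: "\<And>k. is_code q (n k) (C k)" and rate: "\<And>k. code_rate q (n k) (C k) \<ge> r"
    and L: "\<forall>\<epsilon>>0. \<forall>\<^sub>F k in sequentially. real (L k) \<le> 2 powr (\<epsilon> * real (n k))"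
    and decodable: "\<And>k. list_decodable q (n k) (C k) (L k) \<delta> \<gamma>" by blast
  have threshold: "real q - 1 \<le> real q * \<delta> + \<gamma>"
    using threshold_of_normalized_threshold assms(1,4) .
  have n_pos: "n k > 0" for k
    using rate[of k] \<open>r > 0\<close> by (cases "n k = 0") (auto simp: code_rate_def)
  have bound: "real q powr (r * real (n k)) \<le> real q * real q * (real (n k) + 1) * real (L k)" for k
  proof -
    have "real q powr (r * real (n k)) \<le> real (card (C k))"
      using card_ge_of_code_rate[OF _ n_pos \<open>r > 0\<close> rate] assms(1) by simp
    also have "\<dots> \<le> real (q * q * (n k + 1) * L k)"
      using card_le_of_list_decodable[OF assms(1) n_pos assms(2,3) threshold code decodable]
      by (simp only: of_nat_le_iff)
    finally show ?thesis by (simp add: algebra_simps)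
  qed
  show False
    using exponential_not_le_poly_times_subexponential[OF _ \<open>r > 0\<close> _ n L bound] assms(1) by simp
qed

end
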